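(* Let $M=(X,(\leq_k)_{k=1,\dots,n})$ be a multichain with components $C_k=(X,\leq_k)$, let $L:=\prod_{k=1}^n C_k$, let $\delta:X\to L$ be the diagonal map $\delta(x)=(x,\dots,x)$, let $\Delta(L)$ be the join-subsemilattice of $L$ generated by $\delta(X)$, and let $\hat\Delta(L)$ be $\Delta(L)$ with a new least element added. Then the join-semilattice $K(C(M))$ of compact elements of $C(M)$ is isomorphic to $\hat\Delta(L)$ via a join-preserving map.
   Context: A multichain is a set $X$ with finitely many linear orders $\leq_1,\dots,\leq_n$. $C(M)$ is the closure system on $X$ whose closed sets are the sets $\bigcap_{k=1}^n I_k$ with $I_k$ an initial segment of $(X,\leq_k)$, ordered by inclusion; its compact elements are the closures of finite subsets of $X$. $L$ carries the componentwise order. *)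

theory Defs
  imports Main
begin

definition linear_order_on_set :: "'a set \<Rightarrow> ('a \<Rightarrow> 'a \<Rightarrow> bool) \<Rightarrow> bool" where
  "linear_order_on_set X r \<longleftrightarrow>
     (\<forall>x\<in>X. r x x) \<and>
     (\<forall>x\<in>X. \<forall>y\<in>X. r x y \<and> r y x \<longrightarrow> x = y) \<and>
     (\<forall>x\<in>X. \<forall>y\<in>X. \<forall>z\<in>X. r x y \<and> r y z \<longrightarrow> r x z) \<and>
     (\<forall>x\<in>X. \<forall>y\<in>X. r x y \<or> r y x)"

definition multichain :: "'a set \<Rightarrow> nat \<Rightarrow> (nat \<Rightarrow> 'a \<Rightarrow> 'a \<Rightarrow> bool) \<Rightarrow> bool" where
  "multichain X n le \<longleftrightarrow> (\<forall>k\<in>{1..n}. linear_order_on_set X (le k))"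

definition init_seg :: "'a set \<Rightarrow> ('a \<Rightarrow> 'a \<Rightarrow> bool) \<Rightarrow> 'a set \<Rightarrow> bool" where
  "init_seg X r I \<longleftrightarrow> I \<subseteq> X \<and> (\<forall>x\<in>I. \<forall>y\<in>X. r y x \<longrightarrow> y \<in> I)"

definition closed_sets :: "'a set \<Rightarrow> nat \<Rightarrow> (nat \<Rightarrow> 'a \<Rightarrow> 'a \<Rightarrow> bool) \<Rightarrow> 'a set set" where
  "closed_sets X n le =
     {A. \<exists>I. (\<forall>k\<in>{1..n}. init_seg X (le k) (I k)) \<and> A = (\<Inter>k\<in>{1..n}. I k)}"

definition closure_M :: "'a set \<Rightarrow> nat \<Rightarrow> (nat \<Rightarrow> 'a \<Rightarrow> 'a \<Rightarrow> bool) \<Rightarrow> 'a set \<Rightarrow> 'a set" where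
  "closure_M X n le F = \<Inter>{A \<in> closed_sets X n le. F \<subseteq> A}"

definition compact_elems :: "'a set \<Rightarrow> nat \<Rightarrow> (nat \<Rightarrow> 'a \<Rightarrow> 'a \<Rightarrow> bool) \<Rightarrow> 'a set set" where
  "compact_elems X n le = {closure_M X n le F | F. finite F \<and> F \<subseteq> X}"

definition join_C :: "'a set \<Rightarrow> nat \<Rightarrow> (nat \<Rightarrow> 'a \<Rightarrow> 'a \<Rightarrow> bool) \<Rightarrow> 'a set \<Rightarrow> 'a set \<Rightarrow> 'a set" where
  "join_C X n le A B = closure_M X n le (A \<union> B)"

definition prodL :: "'a set \<Rightarrow> nat \<Rightarrow> (nat \<Rightarrow> 'a) set" where
  "prodL X n = {f. (\<forall>k\<in>{1..n}. f k \<in> X) \<and> (\<forall>k. k \<notin> {1..n} \<longrightarrow> f k = undefined)}"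

definition leL :: "nat \<Rightarrow> (nat \<Rightarrow> 'a \<Rightarrow> 'a \<Rightarrow> bool) \<Rightarrow> (nat \<Rightarrow> 'a) \<Rightarrow> (nat \<Rightarrow> 'a) \<Rightarrow> bool" where
  "leL n le f g \<longleftrightarrow> (\<forall>k\<in>{1..n}. le k (f k) (g k))"

definition joinL :: "nat \<Rightarrow> (nat \<Rightarrow> 'a \<Rightarrow> 'a \<Rightarrow> bool) \<Rightarrow> (nat \<Rightarrow> 'a) \<Rightarrow> (nat \<Rightarrow> 'a) \<Rightarrow> (nat \<Rightarrow> 'a)" where
  "joinL n le f g = (\<lambda>k. if k \<in> {1..n} then (if le k (f k) (g k) then g k else f k) else undefined)"

definition delta :: "nat \<Rightarrow> 'a \<Rightarrow> (nat \<Rightarrow> 'a)" where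
  "delta n x = (\<lambda>k. if k \<in> {1..n} then x else undefined)"

inductive_set DeltaL :: "'a set \<Rightarrow> nat \<Rightarrow> (nat \<Rightarrow> 'a \<Rightarrow> 'a \<Rightarrow> bool) \<Rightarrow> (nat \<Rightarrow> 'a) set"
  for X n le where
  gen: "x \<in> X \<Longrightarrow> delta n x \<in> DeltaL X n le"
| join: "f \<in> DeltaL X n le \<Longrightarrow> g \<in> DeltaL X n le \<Longrightarrow> joinL n le f g \<in> DeltaL X n le"

text \<open>hat Delta(L): Delta(L) with a new least element None adjoined.\<close>
definition hatDeltaL :: "'a set \<Rightarrow> nat \<Rightarrow> (nat \<Rightarrow> 'a \<Rightarrow> 'a \<Rightarrow> bool) \<Rightarrow> (nat \<Rightarrow> 'a) option set" where
  "hatDeltaL X n le = insert None (Some ` DeltaL X n le)"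

fun le_hat :: "nat \<Rightarrow> (nat \<Rightarrow> 'a \<Rightarrow> 'a \<Rightarrow> bool) \<Rightarrow> (nat \<Rightarrow> 'a) option \<Rightarrow> (nat \<Rightarrow> 'a) option \<Rightarrow> bool" where
  "le_hat n le None _ = True"
| "le_hat n le (Some f) None = False"
| "le_hat n le (Some f) (Some g) = leL n le f g"

fun join_hat :: "nat \<Rightarrow> (nat \<Rightarrow> 'a \<Rightarrow> 'a \<Rightarrow> bool) \<Rightarrow> (nat \<Rightarrow> 'a) option \<Rightarrow> (nat \<Rightarrow> 'a) option \<Rightarrow> (nat \<Rightarrow> 'a) option" where
  "join_hat n le None b = b"
| "join_hat n le (Some f) None = Some f"
| "join_hat n le (Some f) (Some g) = Some (joinL n le f g)"

end

theory Submission
  imports Defs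
begin

text \<open>For a nonempty finite \<open>F \<subseteq> X\<close> the join of \<open>\<delta>(F)\<close> in \<open>L\<close> is the vector \<open>v\<close> of the
  maxima of \<open>F\<close> in the chains, and the closure of \<open>F\<close> in \<open>C(M)\<close> is the set
  \<open>{y \<in> X. \<forall>k. y \<le>\<^sub>k v\<^sub>k}\<close> of points below \<open>v\<close>: this set is closed, and every closed set
  containing \<open>F\<close> contains it, since each of its initial segments contains the maxima of \<open>F\<close>.
  Hence a nonempty compact element is determined by the vector of its maxima, inclusion
  corresponds to the componentwise order, and the union of generating sets to the
  componentwise maximum; the empty closed set goes to the new least element.\<close>

lemma linear_order_on_set_refl: "linear_order_on_set X r \<Longrightarrow> x \<in> X \<Longrightarrow> r x x"
  unfolding linear_order_on_set_def by blast

lemma linear_order_on_set_antisym: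
  "linear_order_on_set X r \<Longrightarrow> x \<in> X \<Longrightarrow> y \<in> X \<Longrightarrow> r x y \<Longrightarrow> r y x \<Longrightarrow> x = y"
  unfolding linear_order_on_set_def by blast

lemma linear_order_on_set_trans:
  "linear_order_on_set X r \<Longrightarrow> x \<in> X \<Longrightarrow> y \<in> X \<Longrightarrow> z \<in> X \<Longrightarrow> r x y \<Longrightarrow> r y z \<Longrightarrow> r x z"
  unfolding linear_order_on_set_def by blast

lemma linear_order_on_set_total:
  "linear_order_on_set X r \<Longrightarrow> x \<in> X \<Longrightarrow> y \<in> X \<Longrightarrow> r x y \<or> r y x"
  unfolding linear_order_on_set_def by blast

definition chain_max :: "('a \<Rightarrow> 'a \<Rightarrow> bool) \<Rightarrow> 'a set \<Rightarrow> 'a" where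
  "chain_max r F = (THE m. m \<in> F \<and> (\<forall>y\<in>F. r y m))"

lemma linear_order_on_set_finite_has_max:
  assumes lin: "linear_order_on_set X r"
  shows "finite F \<Longrightarrow> F \<noteq> {} \<Longrightarrow> F \<subseteq> X \<Longrightarrow> \<exists>m\<in>F. \<forall>y\<in>F. r y m"
proof (induction F rule: finite_ne_induct)
  case (singleton x)
  then show ?case using linear_order_on_set_refl[OF lin] by auto
next
  case (insert x F)
  then obtain m where m: "m \<in> F" "\<forall>y\<in>F. r y m" by auto
  have xX: "x \<in> X" and mX: "m \<in> X" and FX: "F \<subseteq> X" using insert m by auto
  show ?case
  proof (cases "r x m")
    case True
    then show ?thesis using m by auto
  next
    case False
    then have "r m x" using linear_order_on_set_total[OF lin xX mX] by auto
    then have "\<forall>y\<in>F. r y x" using m FX linear_order_on_set_trans[OF lin _ mX xX] by blast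
    then show ?thesis using linear_order_on_set_refl[OF lin xX] by auto
  qed
qed

lemma chain_max_eqI:
  assumes lin: "linear_order_on_set X r" and "F \<subseteq> X" and "m \<in> F" and "\<forall>y\<in>F. r y m"
  shows "chain_max r F = m"
  unfolding chain_max_def
  using assms linear_order_on_set_antisym[OF lin] by (intro the_equality) blast+

lemma chain_max:
  assumes lin: "linear_order_on_set X r" and "finite F" "F \<noteq> {}" "F \<subseteq> X"
  shows "chain_max r F \<in> F" and "\<forall>y\<in>F. r y (chain_max r F)"
proof -
  obtain m where "m \<in> F" "\<forall>y\<in>F. r y m"
    using linear_order_on_set_finite_has_max[OF assms] by blast
  then show "chain_max r F \<in> F" "\<forall>y\<in>F. r y (chain_max r F)"
    using chain_max_eqI[OF lin \<open>F \<subseteq> X\<close>] by auto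
qed

lemma chain_max_singleton: "linear_order_on_set X r \<Longrightarrow> x \<in> X \<Longrightarrow> chain_max r {x} = x"
  by (rule chain_max_eqI) (auto intro: linear_order_on_set_refl)

lemma chain_max_union:
  assumes lin: "linear_order_on_set X r"
    and F: "finite F" "F \<noteq> {}" "F \<subseteq> X" and G: "finite G" "G \<noteq> {}" "G \<subseteq> X"
  shows "chain_max r (F \<union> G) =
           (if r (chain_max r F) (chain_max r G) then chain_max r G else chain_max r F)"
    (is "_ = ?c")
proof (rule chain_max_eqI[OF lin])
  let ?a = "chain_max r F" and ?b = "chain_max r G"
  note a = chain_max[OF lin F] and b = chain_max[OF lin G]
  have aX: "?a \<in> X" and bX: "?b \<in> X" using a b F G by auto
  show "F \<union> G \<subseteq> X" and "?c \<in> F \<union> G" using F G a b by auto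
  show "\<forall>y\<in>F \<union> G. r y ?c"
  proof
    fix y assume y: "y \<in> F \<union> G"
    then have yX: "y \<in> X" using F G by auto
    show "r y ?c"
    proof (cases "r ?a ?b")
      case True
      then show ?thesis using y a b linear_order_on_set_trans[OF lin yX aX bX] by auto
    next
      case False
      then have "r ?b ?a" using linear_order_on_set_total[OF lin aX bX] by auto
      then show ?thesis using False y a b linear_order_on_set_trans[OF lin yX bX aX] by auto
    qed
  qed
qed

lemma closure_M_subset: "S \<subseteq> closure_M X n le S"
  unfolding closure_M_def by blast

lemma closure_M_least: "C \<in> closed_sets X n le \<Longrightarrow> S \<subseteq> C \<Longrightarrow> closure_M X n le S \<subseteq> C"
  unfolding closure_M_def by blast

lemma closure_M_union_closure_M:
  "closure_M X n le (closure_M X n le S \<union> closure_M X n le T) = closure_M X n le (S \<union> T)"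
proof -
  have "closure_M X n le S \<union> closure_M X n le T \<subseteq> C \<longleftrightarrow> S \<union> T \<subseteq> C"
    if "C \<in> closed_sets X n le" for C
    using that closure_M_least closure_M_subset by (metis Un_subset_iff subset_trans)
  then show ?thesis unfolding closure_M_def by (intro arg_cong[where f = Inter]) auto
qed

lemma closed_sets_memI:
  assumes "A \<in> closed_sets X n le" and "y \<in> X" and "\<forall>k\<in>{1..n}. \<exists>a\<in>A. le k y a"
  shows "y \<in> A"
proof -
  obtain I where I: "\<forall>k\<in>{1..n}. init_seg X (le k) (I k)" "A = (\<Inter>k\<in>{1..n}. I k)"
    using assms(1) unfolding closed_sets_def by auto
  have "y \<in> I k" if k: "k \<in> {1..n}" for k
  proof -
    obtain a where "a \<in> A" "le k y a" using assms(3) k by blast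
    then show ?thesis using I k assms(2) unfolding init_seg_def by blast
  qed
  then show ?thesis using I by auto
qed

definition max_vec :: "nat \<Rightarrow> (nat \<Rightarrow> 'a \<Rightarrow> 'a \<Rightarrow> bool) \<Rightarrow> 'a set \<Rightarrow> nat \<Rightarrow> 'a" where
  "max_vec n le F = (\<lambda>k. if k \<in> {1..n} then chain_max (le k) F else undefined)"

definition below :: "'a set \<Rightarrow> nat \<Rightarrow> (nat \<Rightarrow> 'a \<Rightarrow> 'a \<Rightarrow> bool) \<Rightarrow> (nat \<Rightarrow> 'a) \<Rightarrow> 'a set" where
  "below X n le v = {y \<in> X. \<forall>k\<in>{1..n}. le k y (v k)}"

text \<open>A nonempty compact element may be infinite, but it still has a maximum in every chain,
  namely that of any finite set generating it (\<open>max_vec_closure_M\<close> below).\<close>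
definition compact_code :: "nat \<Rightarrow> (nat \<Rightarrow> 'a \<Rightarrow> 'a \<Rightarrow> bool) \<Rightarrow> 'a set \<Rightarrow> (nat \<Rightarrow> 'a) option" where
  "compact_code n le A = (if A = {} then None else Some (max_vec n le A))"

context
  fixes X :: "'a set" and n :: nat and le :: "nat \<Rightarrow> 'a \<Rightarrow> 'a \<Rightarrow> bool"
  assumes n_pos: "n \<ge> 1" and mc: "multichain X n le"
begin

lemma chain: "k \<in> {1..n} \<Longrightarrow> linear_order_on_set X (le k)"
  using mc unfolding multichain_def by blast

lemma closure_M_empty: "closure_M X n le {} = {}"
proof -
  have "{} \<in> closed_sets X n le"
    unfolding closed_sets_def init_seg_def using n_pos by (intro CollectI exI[of _ "\<lambda>_. {}"]) auto
  then show ?thesis using closure_M_least by blast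
qed

lemma below_closed:
  assumes "\<forall>k\<in>{1..n}. v k \<in> X"
  shows "below X n le v \<in> closed_sets X n le"
  unfolding closed_sets_def
proof (intro CollectI exI conjI)
  let ?I = "\<lambda>k. {y \<in> X. le k y (v k)}"
  show "\<forall>k\<in>{1..n}. init_seg X (le k) (?I k)"
    unfolding init_seg_def using assms linear_order_on_set_trans[OF chain] by blast
  show "below X n le v = (\<Inter>k\<in>{1..n}. ?I k)"
    unfolding below_def using n_pos by auto
qed

lemma max_vec:
  assumes k: "k \<in> {1..n}" and F: "finite F" "F \<noteq> {}" "F \<subseteq> X"
  shows "max_vec n le F k \<in> F" and "\<forall>y\<in>F. le k y (max_vec n le F k)"
  using chain_max[OF chain[OF k] F] k unfolding max_vec_def by auto

lemma closure_M_eq_below: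
  assumes F: "finite F" "F \<noteq> {}" "F \<subseteq> X"
  shows "closure_M X n le F = below X n le (max_vec n le F)"
proof
  have "below X n le (max_vec n le F) \<in> closed_sets X n le"
    using below_closed max_vec(1)[OF _ F] F(3) by blast
  moreover have "F \<subseteq> below X n le (max_vec n le F)"
    using max_vec(2)[OF _ F] F(3) unfolding below_def by blast
  ultimately show "closure_M X n le F \<subseteq> below X n le (max_vec n le F)"
    by (rule closure_M_least)
next
  have "y \<in> C" if y: "y \<in> below X n le (max_vec n le F)"
    and C: "C \<in> closed_sets X n le" "F \<subseteq> C" for y C
    using closed_sets_memI[OF C(1)] y max_vec(1)[OF _ F] C(2) unfolding below_def by blast
  then show "below X n le (max_vec n le F) \<subseteq> closure_M X n le F"
    unfolding closure_M_def by blast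
qed

lemma max_vec_closure_M:
  assumes F: "finite F" "F \<noteq> {}" "F \<subseteq> X"
  shows "max_vec n le (closure_M X n le F) = max_vec n le F"
proof -
  have "chain_max (le k) (closure_M X n le F) = max_vec n le F k" if k: "k \<in> {1..n}" for k
  proof (rule chain_max_eqI[OF chain[OF k]])
    show "closure_M X n le F \<subseteq> X" "\<forall>y\<in>closure_M X n le F. le k y (max_vec n le F k)"
      using closure_M_eq_below[OF F] k unfolding below_def by auto
    show "max_vec n le F k \<in> closure_M X n le F"
      using max_vec(1)[OF k F] closure_M_subset[of F X n le] by blast
  qed
  then show ?thesis by (auto simp: fun_eq_iff max_vec_def)
qed

lemma closure_M_subset_iff:
  assumes F: "finite F" "F \<noteq> {}" "F \<subseteq> X" and G: "finite G" "G \<noteq> {}" "G \<subseteq> X"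
  shows "closure_M X n le F \<subseteq> closure_M X n le G \<longleftrightarrow> leL n le (max_vec n le F) (max_vec n le G)"
proof
  assume sub: "closure_M X n le F \<subseteq> closure_M X n le G"
  have "le k (max_vec n le F k) (max_vec n le G k)" if k: "k \<in> {1..n}" for k
  proof -
    have "max_vec n le F k \<in> closure_M X n le G"
      using max_vec(1)[OF k F] closure_M_subset[of F X n le] sub by blast
    then show ?thesis using k unfolding closure_M_eq_below[OF G] below_def by blast
  qed
  then show "leL n le (max_vec n le F) (max_vec n le G)"
    unfolding leL_def by blast
next
  assume le_FG: "leL n le (max_vec n le F) (max_vec n le G)"
  have "y \<in> below X n le (max_vec n le G)" if y: "y \<in> below X n le (max_vec n le F)" for y
  proof -
    have "le k y (max_vec n le G k)" if k: "k \<in> {1..n}" for k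
    proof (rule linear_order_on_set_trans[OF chain[OF k]])
      show "le k y (max_vec n le F k)" "le k (max_vec n le F k) (max_vec n le G k)"
        using y le_FG k unfolding below_def leL_def by blast+
      show "y \<in> X" using y unfolding below_def by blast
      show "max_vec n le F k \<in> X" "max_vec n le G k \<in> X"
        using max_vec(1)[OF k F] max_vec(1)[OF k G] F(3) G(3) by blast+
    qed
    then show ?thesis using y unfolding below_def by blast
  qed
  then show "closure_M X n le F \<subseteq> closure_M X n le G"
    unfolding closure_M_eq_below[OF F] closure_M_eq_below[OF G] by blast
qed

lemma max_vec_union:
  assumes F: "finite F" "F \<noteq> {}" "F \<subseteq> X" and G: "finite G" "G \<noteq> {}" "G \<subseteq> X"
  shows "max_vec n le (F \<union> G) = joinL n le (max_vec n le F) (max_vec n le G)"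
proof
  fix k
  show "max_vec n le (F \<union> G) k = joinL n le (max_vec n le F) (max_vec n le G) k"
    using chain_max_union[OF chain F G] by (simp add: max_vec_def joinL_def)
qed

lemma max_vec_singleton:
  assumes "x \<in> X"
  shows "max_vec n le {x} = delta n x"
proof
  fix k
  show "max_vec n le {x} k = delta n x k"
    using chain_max_singleton[OF chain assms] by (simp add: max_vec_def delta_def)
qed

lemma DeltaL_eq_max_vec: "DeltaL X n le = {max_vec n le F | F. finite F \<and> F \<noteq> {} \<and> F \<subseteq> X}"
proof (intro antisym subsetI)
  fix f assume "f \<in> DeltaL X n le"
  then show "f \<in> {max_vec n le F | F. finite F \<and> F \<noteq> {} \<and> F \<subseteq> X}"
  proof (induction rule: DeltaL.induct)
    case (gen x)
    then show ?case using max_vec_singleton by (intro CollectI exI[of _ "{x}"]) auto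
  next
    case (join f g)
    then obtain F G where "finite F" "F \<noteq> {}" "F \<subseteq> X" "f = max_vec n le F"
      and "finite G" "G \<noteq> {}" "G \<subseteq> X" "g = max_vec n le G" by blast
    then show ?case using max_vec_union by (intro CollectI exI[of _ "F \<union> G"]) auto
  qed
next
  fix f assume "f \<in> {max_vec n le F | F. finite F \<and> F \<noteq> {} \<and> F \<subseteq> X}"
  then obtain F where F: "finite F" "F \<noteq> {}" "F \<subseteq> X" and f: "f = max_vec n le F" by blast
  have "max_vec n le F \<in> DeltaL X n le"
    using F
  proof (induction F rule: finite_ne_induct)
    case (singleton x)
    then show ?case using max_vec_singleton DeltaL.gen by fastforce
  next
    case (insert x F)
    then show ?case
      using max_vec_union[of "{x}" F] max_vec_singleton DeltaL.gen DeltaL.join by fastforce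
  qed
  then show "f \<in> DeltaL X n le" using f by simp
qed

lemma compact_code_closure_M:
  "finite F \<Longrightarrow> F \<subseteq> X \<Longrightarrow>
     compact_code n le (closure_M X n le F) = (if F = {} then None else Some (max_vec n le F))"
  using closure_M_empty closure_M_subset[of F X n le] max_vec_closure_M
  unfolding compact_code_def by auto

lemma compact_code_subset_iff:
  assumes "A \<in> compact_elems X n le" and "B \<in> compact_elems X n le"
  shows "A \<subseteq> B \<longleftrightarrow> le_hat n le (compact_code n le A) (compact_code n le B)"
proof -
  obtain F G where F: "finite F" "F \<subseteq> X" "A = closure_M X n le F"
    and G: "finite G" "G \<subseteq> X" "B = closure_M X n le G"
    using assms unfolding compact_elems_def by blast
  have "A \<noteq> {}" if "F \<noteq> {}" using that F(3) closure_M_subset[of F X n le] by blast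
  then show ?thesis
    using F G compact_code_closure_M[OF F(1,2)] compact_code_closure_M[OF G(1,2)]
      closure_M_subset_iff closure_M_empty by (cases "F = {}"; cases "G = {}") auto
qed

lemma compact_code_join:
  assumes "A \<in> compact_elems X n le" and "B \<in> compact_elems X n le"
  shows "compact_code n le (join_C X n le A B) =
           join_hat n le (compact_code n le A) (compact_code n le B)"
proof -
  obtain F G where F: "finite F" "F \<subseteq> X" "A = closure_M X n le F"
    and G: "finite G" "G \<subseteq> X" "B = closure_M X n le G"
    using assms unfolding compact_elems_def by blast
  have "join_C X n le A B = closure_M X n le (F \<union> G)"
    unfolding join_C_def F(3) G(3) by (rule closure_M_union_closure_M)
  then show ?thesis
    using F G compact_code_closure_M[of "F \<union> G"] compact_code_closure_M[OF F(1,2)]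
      compact_code_closure_M[OF G(1,2)] max_vec_union[of F G] by auto
qed

lemma compact_code_image: "compact_code n le ` compact_elems X n le = hatDeltaL X n le"
proof -
  have "compact_elems X n le = closure_M X n le ` {F. finite F \<and> F \<subseteq> X}"
    unfolding compact_elems_def by blast
  then have "compact_code n le ` compact_elems X n le
      = (\<lambda>F. if F = {} then None else Some (max_vec n le F)) ` {F. finite F \<and> F \<subseteq> X}"
    using compact_code_closure_M by (simp add: image_image)
  also have "\<dots> = hatDeltaL X n le"
    unfolding hatDeltaL_def DeltaL_eq_max_vec by force
  finally show ?thesis .
qed

lemma inj_on_compact_code: "inj_on (compact_code n le) (compact_elems X n le)"
  by (rule inj_onI) (metis compact_code_subset_iff subset_antisym order_refl)

end

theorem theorem7p14:
  fixes X :: "'a set" and n :: nat and le :: "nat \<Rightarrow> 'a \<Rightarrow> 'a \<Rightarrow> bool"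
  assumes "n \<ge> 1"
    and "multichain X n le"
  shows "\<exists>\<phi>. bij_betw \<phi> (compact_elems X n le) (hatDeltaL X n le)
            \<and> (\<forall>A\<in>compact_elems X n le. \<forall>B\<in>compact_elems X n le.
                  A \<subseteq> B \<longleftrightarrow> le_hat n le (\<phi> A) (\<phi> B))
            \<and> (\<forall>A\<in>compact_elems X n le. \<forall>B\<in>compact_elems X n le.
                  \<phi> (join_C X n le A B) = join_hat n le (\<phi> A) (\<phi> B))"
proof (intro exI[of _ "compact_code n le"] conjI ballI)
  show "bij_betw (compact_code n le) (compact_elems X n le) (hatDeltaL X n le)"
    unfolding bij_betw_def
    using inj_on_compact_code[OF assms] compact_code_image[OF assms] by blast
qed (use compact_code_subset_iff[OF assms] compact_code_join[OF assms] in auto)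

end
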